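(* Let $G=(V,E)$ be a network and consider an $\mathbb{F}_q$-valued rate-$\omega$ LNEC code on $G$, as in the context. For a sink node $t\in T$ with $\dim\Phi(t)=\omega$, the code corrects at $t$ any error vector in the set $$\mathcal{Z}\Big(\mathcal{E}_t\big(\lfloor (d_{\min}^{(t)}-1)/2\rfloor\big)\Big)=\Big\{z\in\mathbb{F}_q^{|E|}: z\text{ matches some }\xi\in\mathcal{E}_t\big(\lfloor (d_{\min}^{(t)}-1)/2\rfloor\big)\Big\}.$$
   Context: Network: $G=(V,E)$ is a finite directed acyclic graph (parallel edges allowed) with a single source node $s$ and a set of sink nodes $T\subseteq V\setminus\{s\}$; $s$ has no incoming edges and sink nodes have no outgoing edges. For an edge $e$, $\mathrm{tail}(e)$, $\mathrm{head}(e)$ are its tail and head; $\mathrm{In}(v)$, $\mathrm{Out}(v)$ are the incoming/outgoing edge sets of node $v$. A directed path is a sequence of edges $(e_1,\dots,e_m)$, $m\ge1$, with $\mathrm{tail}(e_{k+1})=\mathrm{head}(e_k)$. LNEC code: with rate $\omega\ge1$ and finite field $\mathbb{F}_q$, introduce imaginary source edges $d_1',\dots,d_\omega'$ ending at $s$ with $\mathrm{In}(s)=\{d_1',\dots,d_\omega'\}$, and for each $e\in E$ an imaginary error edge $e'$ with head $\mathrm{tail}(e)$; $E'=\{e':e\in E\}$ (for non-source nodes, $\mathrm{In}(v)$ contains only edges of $E$). The code is given by local encoding coefficients $k_{d,e}\in\mathbb{F}_q$ for $e\in E$, $d\in\mathrm{In}(\mathrm{tail}(e))$. Extended global encoding kernels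 are vectors in $\mathbb{F}_q^{\omega+|E|}$ indexed by $\{d_i'\}\cup E'$: $\tilde f_{d_i'}=1_{d_i'}$, $\tilde f_{e'}=1_{e'}$ (standard basis vectors), and recursively in topological order $\tilde f_e=\sum_{d\in\mathrm{In}(\mathrm{tail}(e))}k_{d,e}\tilde f_d+1_{e'}$. For sink $t$, $\mathrm{row}_t(d')=(\tilde f_{\hat e}(d'):\hat e\in\mathrm{In}(t))$. Message space $\Phi(t)=\langle\mathrm{row}_t(d_i'):1\le i\le\omega\rangle$; error space $\Delta(t,\xi)=\langle\mathrm{row}_t(e'):e\in\xi\rangle$ for $\xi\subseteq E$. Minimum distance at $t$: $d_{\min}^{(t)}=\min\{|\xi|:\xi\subseteq E,\ \Phi(t)\cap\Delta(t,\xi)\neq\{0\}\}$. Error correction: an error vector $z=(z_e:e\in E)\in\mathbb{F}_q^{|E|}$ matches $\xi\subseteq E$ if $z_e=0$ for all $e\notin\xi$. For source message $x\in\mathbb{F}_q^\omega$ and error vector $z$, the received vector at $t$ is $\tilde y_t(x,z)=(x\ z)\cdot\tilde F_t$, $\tilde F_t=[\tilde f_e:e\in\mathrm{In}(t)]$. For a set $\mathcal{Z}$ of error vectors, the code corrects at $t$ any error vector in $\mathcal{Z}$ if for all $x,x'\in\mathbb{F}_q^\omega$ and $z,z'\in\mathcal{Z}$, $\tilde y_t(x,z)=\tilde y_t(x',z')$ implies $x=x'$. Graph notions: for $\xi\subseteq E$ and a node $u$, $A\subseteq E$ is a cut separating $u$ from $\xi$ if every directed path in $G$ whose first edge lies in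 $\xi$ and whose last edge has head $u$ contains an edge of $A$; $\mathrm{mincut}(\xi,u)$ is the minimum size of such a cut. $\mathcal{E}_t(r)=\{\xi\subseteq E:\mathrm{mincut}(\xi,t)\le r\}$. *)

theory Defs
  imports Complex_Main "HOL-Library.Function_Algebras"
begin

text \<open>A network: node set V, edge set E (edges are abstract, so parallel
 edges are allowed), tail/head maps tail, head, source s, sinks T.\<close>

definition is_path :: "'e set \<Rightarrow> ('e \<Rightarrow> 'v) \<Rightarrow> ('e \<Rightarrow> 'v) \<Rightarrow> 'e list \<Rightarrow> bool" where
  "is_path E tail head p \<longleftrightarrow> p \<noteq> [] \<and> set p \<subseteq> E \<and>
     (\<forall>k. Suc k < length p \<longrightarrow> tail (p ! Suc k) = head (p ! k))"

definition network :: "'v set \<Rightarrow> 'e set \<Rightarrow> ('e \<Rightarrow> 'v) \<Rightarrow> ('e \<Rightarrow> 'v) \<Rightarrow> 'v \<Rightarrow> 'v set \<Rightarrow> bool" where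
  "network V E tail head s T \<longleftrightarrow>
     finite V \<and> finite E \<and> (\<forall>e\<in>E. tail e \<in> V \<and> head e \<in> V) \<and>
     \<comment> \<open>acyclic: no directed cycle\<close>
     (\<forall>p. is_path E tail head p \<longrightarrow> head (last p) \<noteq> tail (List.hd p)) \<and>
     \<comment> \<open>single source s: s has no incoming edges, every other node has one\<close>
     s \<in> V \<and> (\<forall>e\<in>E. head e \<noteq> s) \<and> (\<forall>v\<in>V. v \<noteq> s \<longrightarrow> (\<exists>e\<in>E. head e = v)) \<and>
     \<comment> \<open>sinks\<close>
     T \<subseteq> V - {s} \<and> (\<forall>t\<in>T. \<forall>e\<in>E. tail e \<noteq> t)"

definition In_edges :: "'e set \<Rightarrow> ('e \<Rightarrow> 'v) \<Rightarrow> 'v \<Rightarrow> 'e set" where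
  "In_edges E head v = {e \<in> E. head e = v}"

text \<open>Inputs of a coding node: imaginary source edges d_i' (Src i) or real edges.\<close>
datatype 'e inp = Src nat | Real 'e

text \<open>Coordinates of extended global encoding kernels: d_i' (D i) and e' (Err e).\<close>
datatype 'e coord = D nat | Err 'e

definition inputs :: "nat \<Rightarrow> 'e set \<Rightarrow> ('e \<Rightarrow> 'v) \<Rightarrow> 'v \<Rightarrow> 'v \<Rightarrow> 'e inp set" where
  "inputs \<omega> E head s v = (if v = s then Src ` {..<\<omega>} else Real ` In_edges E head v)"

definition unitv :: "'e coord \<Rightarrow> 'e coord \<Rightarrow> 'a::field" where
  "unitv c = (\<lambda>c'. if c' = c then 1 else 0)"

fun inp_kernel :: "('e \<Rightarrow> 'e coord \<Rightarrow> 'a::field) \<Rightarrow> 'e inp \<Rightarrow> 'e coord \<Rightarrow> 'a" where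
  "inp_kernel f (Src i) = unitv (D i)"
| "inp_kernel f (Real e) = f e"

text \<open>f is the family of extended global encoding kernels of the code with local
 encoding coefficients k (determined uniquely by this recursion on an acyclic network).\<close>
definition ext_kernels ::
  "nat \<Rightarrow> 'e set \<Rightarrow> ('e \<Rightarrow> 'v) \<Rightarrow> ('e \<Rightarrow> 'v) \<Rightarrow> 'v \<Rightarrow> ('e inp \<Rightarrow> 'e \<Rightarrow> 'a::field)
     \<Rightarrow> ('e \<Rightarrow> 'e coord \<Rightarrow> 'a) \<Rightarrow> bool" where
  "ext_kernels \<omega> E tail head s k f \<longleftrightarrow>
     (\<forall>e\<in>E. f e = (\<lambda>c. (\<Sum>d\<in>inputs \<omega> E head s (tail e). k d e * inp_kernel f d c) + unitv (Err e) c))"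

text \<open>Vectors indexed by In(t) are functions 'e \<Rightarrow> 'a vanishing outside In(t).\<close>
definition fscale :: "'a::field \<Rightarrow> ('e \<Rightarrow> 'a) \<Rightarrow> ('e \<Rightarrow> 'a)" where
  "fscale a v = (\<lambda>x. a * v x)"

definition row :: "'e set \<Rightarrow> ('e \<Rightarrow> 'v) \<Rightarrow> ('e \<Rightarrow> 'e coord \<Rightarrow> 'a::field) \<Rightarrow> 'v \<Rightarrow> 'e coord \<Rightarrow> 'e \<Rightarrow> 'a" where
  "row E head f t c = (\<lambda>e. if e \<in> In_edges E head t then f e c else 0)"

definition msg_space :: "nat \<Rightarrow> 'e set \<Rightarrow> ('e \<Rightarrow> 'v) \<Rightarrow> ('e \<Rightarrow> 'e coord \<Rightarrow> 'a::field) \<Rightarrow> 'v \<Rightarrow> ('e \<Rightarrow> 'a) set" where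
  "msg_space \<omega> E head f t = module.span fscale ((\<lambda>i. row E head f t (D i)) ` {..<\<omega>})"

definition err_space :: "'e set \<Rightarrow> ('e \<Rightarrow> 'v) \<Rightarrow> ('e \<Rightarrow> 'e coord \<Rightarrow> 'a::field) \<Rightarrow> 'v \<Rightarrow> 'e set \<Rightarrow> ('e \<Rightarrow> 'a) set" where
  "err_space E head f t \<xi> = module.span fscale ((\<lambda>e. row E head f t (Err e)) ` \<xi>)"

definition dmin :: "nat \<Rightarrow> 'e set \<Rightarrow> ('e \<Rightarrow> 'v) \<Rightarrow> ('e \<Rightarrow> 'e coord \<Rightarrow> 'a::field) \<Rightarrow> 'v \<Rightarrow> nat" where
  "dmin \<omega> E head f t = (LEAST n. \<exists>\<xi>. \<xi> \<subseteq> E \<and> card \<xi> = n \<and>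
       msg_space \<omega> E head f t \<inter> err_space E head f t \<xi> \<noteq> {0})"

definition matches :: "('e \<Rightarrow> 'a::zero) \<Rightarrow> 'e set \<Rightarrow> bool" where
  "matches z \<xi> \<longleftrightarrow> (\<forall>e. e \<notin> \<xi> \<longrightarrow> z e = 0)"

text \<open>Source messages x \<in> F^\<omega> as functions nat \<Rightarrow> 'a vanishing from \<omega> on.\<close>
definition messages :: "nat \<Rightarrow> (nat \<Rightarrow> 'a::zero) set" where
  "messages \<omega> = {x. \<forall>i\<ge>\<omega>. x i = 0}"

definition received ::
  "nat \<Rightarrow> 'e set \<Rightarrow> ('e \<Rightarrow> 'v) \<Rightarrow> ('e \<Rightarrow> 'e coord \<Rightarrow> 'a::field) \<Rightarrow> 'v
     \<Rightarrow> (nat \<Rightarrow> 'a) \<Rightarrow> ('e \<Rightarrow> 'a) \<Rightarrow> 'e \<Rightarrow> 'a" where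
  "received \<omega> E head f t x z = (\<lambda>e'. if e' \<in> In_edges E head t then
      (\<Sum>i<\<omega>. x i * f e' (D i)) + (\<Sum>e\<in>E. z e * f e' (Err e)) else 0)"

definition corrects ::
  "nat \<Rightarrow> 'e set \<Rightarrow> ('e \<Rightarrow> 'v) \<Rightarrow> ('e \<Rightarrow> 'e coord \<Rightarrow> 'a::field) \<Rightarrow> 'v \<Rightarrow> ('e \<Rightarrow> 'a) set \<Rightarrow> bool" where
  "corrects \<omega> E head f t Z \<longleftrightarrow>
     (\<forall>x\<in>messages \<omega>. \<forall>x'\<in>messages \<omega>. \<forall>z\<in>Z. \<forall>z'\<in>Z.
        received \<omega> E head f t x z = received \<omega> E head f t x' z' \<longrightarrow> x = x')"

definition is_cut :: "'e set \<Rightarrow> ('e \<Rightarrow> 'v) \<Rightarrow> ('e \<Rightarrow> 'v) \<Rightarrow> 'e set \<Rightarrow> 'v \<Rightarrow> 'e set \<Rightarrow> bool" where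
  "is_cut E tail head \<xi> u A \<longleftrightarrow> A \<subseteq> E \<and>
     (\<forall>p. is_path E tail head p \<and> List.hd p \<in> \<xi> \<and> head (last p) = u \<longrightarrow> set p \<inter> A \<noteq> {})"

definition mincut :: "'e set \<Rightarrow> ('e \<Rightarrow> 'v) \<Rightarrow> ('e \<Rightarrow> 'v) \<Rightarrow> 'e set \<Rightarrow> 'v \<Rightarrow> nat" where
  "mincut E tail head \<xi> u = (LEAST n. \<exists>A. is_cut E tail head \<xi> u A \<and> card A = n)"

definition cal_E :: "'e set \<Rightarrow> ('e \<Rightarrow> 'v) \<Rightarrow> ('e \<Rightarrow> 'v) \<Rightarrow> 'v \<Rightarrow> nat \<Rightarrow> 'e set set" where
  "cal_E E tail head t r = {\<xi>. \<xi> \<subseteq> E \<and> mincut E tail head \<xi> t \<le> r}"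

definition cal_Z :: "'e set \<Rightarrow> 'e set set \<Rightarrow> ('e \<Rightarrow> 'a::zero) set" where
  "cal_Z E \<Xi> = {z. \<exists>\<xi>\<in>\<Xi>. matches z \<xi>}"

end

theory Submission
  imports Defs
begin

text \<open>If two pairs (x, z) and (x', z') produce the same received vector at t, then the message
 part of x - x' equals the error part of z' - z. An error matching \<xi> reaches t only through a
 cut A separating \<xi> from t: expanding the extended kernels along their first edge shows that the
 t-row of e' (for e \<in> \<xi>) is a linear combination of the t-rows of a' for a \<in> A. So the
 difference lies in \<Phi>(t) \<inter> \<Delta>(t, A \<union> A') with |A \<union> A'| below the minimum distance, hence
 vanishes, and dim \<Phi>(t) = \<omega> forces x = x'.\<close>

definition Out_edges :: "'e set \<Rightarrow> ('e \<Rightarrow> 'v) \<Rightarrow> 'v \<Rightarrow> 'e set" where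
  "Out_edges E tail v = {e \<in> E. tail e = v}"

definition edge_succ :: "'e set \<Rightarrow> ('e \<Rightarrow> 'v) \<Rightarrow> ('e \<Rightarrow> 'v) \<Rightarrow> ('e \<times> 'e) set" where
  "edge_succ E tail head = {(d, e). d \<in> E \<and> e \<in> E \<and> head d = tail e}"

lemma is_path_Cons:
  assumes "is_path E tail head p" "a \<in> E" "tail (hd p) = head a"
  shows "is_path E tail head (a # p)"
proof -
  have "p \<noteq> []" using assms(1) by (simp add: is_path_def)
  then have "tail ((a # p) ! Suc k) = head ((a # p) ! k)" if "Suc k < length (a # p)" for k
    using assms that by (cases k) (auto simp: is_path_def hd_conv_nth)
  then show ?thesis using assms by (auto simp: is_path_def)
qed

lemma trancl_edge_succ_imp_path:
  assumes "(d, e) \<in> (edge_succ E tail head)\<^sup>+"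
  shows "\<exists>p. is_path E tail head p \<and> hd p = d \<and> head (last p) = tail e"
  using assms
proof (induction rule: converse_trancl_induct)
  case (base d)
  then show ?case by (intro exI[of _ "[d]"]) (auto simp: is_path_def edge_succ_def)
next
  case (step d d')
  then obtain p where p: "is_path E tail head p" "hd p = d'" "head (last p) = tail e" by blast
  then have "p \<noteq> []" by (simp add: is_path_def)
  with p step(1) show ?case
    by (intro exI[of _ "d # p"]) (auto simp: edge_succ_def intro: is_path_Cons)
qed

lemma network_wf_edge_succ:
  assumes "network V E tail head s T"
  shows "wf (edge_succ E tail head)" "wf ((edge_succ E tail head)\<inverse>)"
proof -
  have fin: "finite (edge_succ E tail head)"
    by (rule finite_subset[of _ "E \<times> E"]) (use assms in \<open>auto simp: edge_succ_def network_def\<close>)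
  have "acyclic (edge_succ E tail head)"
    unfolding acyclic_def
  proof (intro allI notI)
    fix e assume "(e, e) \<in> (edge_succ E tail head)\<^sup>+"
    then obtain p where "is_path E tail head p" "hd p = e" "head (last p) = tail e"
      by (blast dest: trancl_edge_succ_imp_path)
    then show False using assms unfolding network_def by metis
  qed
  with fin show "wf (edge_succ E tail head)" "wf ((edge_succ E tail head)\<inverse>)"
    by (simp_all add: finite_acyclic_wf finite_acyclic_wf_converse)
qed

lemma In_edges_source:
  assumes "network V E tail head s T"
  shows "In_edges E head s = {}"
  using assms by (auto simp: network_def In_edges_def)

lemma ext_kernels_Err:
  assumes net: "network V E tail head s T" and ek: "ext_kernels \<omega> E tail head s k f"
    and e: "e \<in> E"
  shows "f e (Err c) =
    (\<Sum>d\<in>In_edges E head (tail e). k (Real d) e * f d (Err c)) + (if c = e then 1 else 0)"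
proof -
  have "f e (Err c) =
      (\<Sum>d\<in>inputs \<omega> E head s (tail e). k d e * inp_kernel f d (Err c)) + unitv (Err e) (Err c)"
    using ek e unfolding ext_kernels_def by auto
  then show ?thesis
    using In_edges_source[OF net]
    by (auto simp: inputs_def unitv_def sum.reindex inj_on_def)
qed

text \<open>f e (Err e0) is the sum, over the paths from e0 to e, of the products of the local
 coefficients along the path: the defining recursion splits off the last edge of these paths,
 and this lemma splits off the first one.\<close>

lemma ext_kernels_Err_first_edge:
  assumes net: "network V E tail head s T" and ek: "ext_kernels \<omega> E tail head s k f"
    and e0: "e0 \<in> E"
  shows "e \<in> E \<Longrightarrow> f e (Err e0) = (if e = e0 then 1 else 0) +
           (\<Sum>e1\<in>Out_edges E tail (head e0). k (Real e0) e1 * f e (Err e1))"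
proof (induction e rule: wf_induct_rule[OF network_wf_edge_succ(1)[OF net]])
  case (1 e)
  define In where "In = In_edges E head (tail e)"
  define Out where "Out = Out_edges E tail (head e0)"
  have fin: "finite In" "finite Out"
    using net by (auto simp: In_def Out_def In_edges_def Out_edges_def network_def)
  have IH: "f d (Err e0) = (if d = e0 then 1 else 0) + (\<Sum>e1\<in>Out. k (Real e0) e1 * f d (Err e1))"
    if "d \<in> In" for d
    using 1 that by (auto simp: In_def Out_def In_edges_def edge_succ_def)
  have e0_term: "(\<Sum>d\<in>In. k (Real d) e * (if d = e0 then 1 else 0)) =
      (\<Sum>e1\<in>Out. k (Real e0) e1 * (if e1 = e then 1 else 0))"
    using fin e0 1(2)
    by (auto simp: In_def Out_def In_edges_def Out_edges_def if_distrib sum.delta cong: if_cong)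
  have "f e (Err e0) = (\<Sum>d\<in>In. k (Real d) e * f d (Err e0)) + (if e0 = e then 1 else 0)"
    using ext_kernels_Err[OF net ek 1(2)] by (simp add: In_def)
  also have "\<dots> = (\<Sum>d\<in>In. k (Real d) e * (if d = e0 then 1 else 0)) +
      (\<Sum>d\<in>In. \<Sum>e1\<in>Out. k (Real e0) e1 * (k (Real d) e * f d (Err e1))) + (if e0 = e then 1 else 0)"
    by (simp add: IH distrib_left sum_distrib_left sum.distrib mult.left_commute cong: sum.cong)
  also have "(\<Sum>d\<in>In. \<Sum>e1\<in>Out. k (Real e0) e1 * (k (Real d) e * f d (Err e1))) =
      (\<Sum>e1\<in>Out. k (Real e0) e1 * (\<Sum>d\<in>In. k (Real d) e * f d (Err e1)))"
    by (subst sum.swap) (simp add: sum_distrib_left)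
  finally have "f e (Err e0) = (if e = e0 then 1 else 0) +
      (\<Sum>e1\<in>Out. k (Real e0) e1 * ((\<Sum>d\<in>In. k (Real d) e * f d (Err e1)) + (if e1 = e then 1 else 0)))"
    unfolding e0_term by (simp add: distrib_left sum.distrib algebra_simps)
  also have "\<dots> = (if e = e0 then 1 else 0) + (\<Sum>e1\<in>Out. k (Real e0) e1 * f e (Err e1))"
    using ext_kernels_Err[OF net ek 1(2)] by (simp add: In_def)
  finally show ?case unfolding Out_def .
qed

lemma is_cut_antimono:
  "is_cut E tail head \<xi> u A \<Longrightarrow> \<xi>' \<subseteq> \<xi> \<Longrightarrow> is_cut E tail head \<xi>' u A"
  unfolding is_cut_def by blast

lemma is_cut_Un:
  "is_cut E tail head \<xi> u A \<Longrightarrow> is_cut E tail head \<xi>' u A' \<Longrightarrow>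
   is_cut E tail head (\<xi> \<union> \<xi>') u (A \<union> A')"
  unfolding is_cut_def by blast

lemma is_cut_In_edge:
  assumes "is_cut E tail head {e} u A" "e \<in> In_edges E head u"
  shows "e \<in> A"
proof -
  have "is_path E tail head [e]" using assms(2) by (simp add: is_path_def In_edges_def)
  then show ?thesis using assms unfolding is_cut_def In_edges_def by fastforce
qed

lemma is_cut_Out_edge:
  assumes cut: "is_cut E tail head {e} u A" and "e \<notin> A" "e \<in> E"
    and "e' \<in> Out_edges E tail (head e)"
  shows "is_cut E tail head {e'} u A"
  unfolding is_cut_def
proof (intro conjI allI impI)
  show "A \<subseteq> E" using cut by (simp add: is_cut_def)
  fix p assume p: "is_path E tail head p \<and> hd p \<in> {e'} \<and> head (last p) = u"
  then have "p \<noteq> []" by (simp add: is_path_def)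
  with p assms have "is_path E tail head (e # p)" "hd (e # p) \<in> {e}" "head (last (e # p)) = u"
    by (auto simp: Out_edges_def intro: is_path_Cons)
  then show "set p \<inter> A \<noteq> {}" using cut \<open>e \<notin> A\<close> unfolding is_cut_def by fastforce
qed

lemma mincut_attained: "\<exists>A. is_cut E tail head \<xi> u A \<and> card A = mincut E tail head \<xi> u"
proof -
  have "is_cut E tail head \<xi> u E" unfolding is_cut_def is_path_def by (auto simp: neq_Nil_conv)
  then have "\<exists>n A. is_cut E tail head \<xi> u A \<and> card A = n" by blast
  then show ?thesis unfolding mincut_def by (rule LeastI_ex)
qed

interpretation fun_space: vector_space "fscale :: 'a::field \<Rightarrow> ('e \<Rightarrow> 'a) \<Rightarrow> ('e \<Rightarrow> 'a)"
  by unfold_locales (auto simp: fscale_def fun_eq_iff algebra_simps)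

lemma sum_apply: "(\<Sum>i\<in>I. g i) x = (\<Sum>i\<in>I. g i x)"
  by (induction I rule: infinite_finite_induct) auto

lemma row_Err_in_span_cut:
  fixes f :: "'e \<Rightarrow> 'e coord \<Rightarrow> 'a::field"
  assumes net: "network V E tail head s T" and ek: "ext_kernels \<omega> E tail head s k f"
  shows "e \<in> E \<Longrightarrow> is_cut E tail head {e} t A \<Longrightarrow>
    row E head f t (Err e) \<in> fun_space.span ((\<lambda>a. row E head f t (Err a)) ` A)"
proof (induction e rule: wf_induct_rule[OF network_wf_edge_succ(2)[OF net]])
  case (1 e)
  define Out where "Out = Out_edges E tail (head e)"
  show ?case
  proof (cases "e \<in> A")
    case True then show ?thesis by (intro fun_space.span_base) auto
  next
    case False
    then have "e \<notin> In_edges E head t" using is_cut_In_edge[OF 1(3)] by blast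
    then have expand: "row E head f t (Err e) =
        (\<Sum>e1\<in>Out. fscale (k (Real e) e1) (row E head f t (Err e1)))"
      using ext_kernels_Err_first_edge[OF net ek 1(2)]
      by (auto simp: fun_eq_iff row_def sum_apply fscale_def Out_def In_edges_def)
    have IH: "row E head f t (Err e1) \<in> fun_space.span ((\<lambda>a. row E head f t (Err a)) ` A)"
      if "e1 \<in> Out" for e1
    proof (rule 1(1))
      show "(e1, e) \<in> (edge_succ E tail head)\<inverse>" "e1 \<in> E"
        using that 1(2) by (auto simp: Out_def Out_edges_def edge_succ_def)
      show "is_cut E tail head {e1} t A"
        using is_cut_Out_edge[OF 1(3) False 1(2)] that by (simp add: Out_def)
    qed
    show ?thesis unfolding expand by (intro fun_space.span_sum fun_space.span_scale IH)
  qed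
qed

definition msg_word ::
  "nat \<Rightarrow> 'e set \<Rightarrow> ('e \<Rightarrow> 'v) \<Rightarrow> ('e \<Rightarrow> 'e coord \<Rightarrow> 'a::field) \<Rightarrow> 'v \<Rightarrow> (nat \<Rightarrow> 'a) \<Rightarrow> 'e \<Rightarrow> 'a"
  where "msg_word \<omega> E head f t x = (\<Sum>i<\<omega>. fscale (x i) (row E head f t (D i)))"

definition err_word ::
  "'e set \<Rightarrow> ('e \<Rightarrow> 'v) \<Rightarrow> ('e \<Rightarrow> 'e coord \<Rightarrow> 'a::field) \<Rightarrow> 'v \<Rightarrow> ('e \<Rightarrow> 'a) \<Rightarrow> 'e \<Rightarrow> 'a"
  where "err_word E head f t z = (\<Sum>e\<in>E. fscale (z e) (row E head f t (Err e)))"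

lemma received_eq_msg_word_plus_err_word:
  "received \<omega> E head f t x z = msg_word \<omega> E head f t x + err_word E head f t z"
  by (auto simp: received_def msg_word_def err_word_def fun_eq_iff sum_apply fscale_def row_def)

lemma msg_word_diff:
  "msg_word \<omega> E head f t (x - y) = msg_word \<omega> E head f t x - msg_word \<omega> E head f t y"
  by (simp add: msg_word_def fun_space.scale_left_diff_distrib sum_subtractf)

lemma err_word_diff:
  "err_word E head f t (z - z') = err_word E head f t z - err_word E head f t z'"
  by (simp add: err_word_def fun_space.scale_left_diff_distrib sum_subtractf)

lemma msg_word_in_msg_space: "msg_word \<omega> E head f t x \<in> msg_space \<omega> E head f t"
  unfolding msg_word_def msg_space_def
  by (intro fun_space.span_sum fun_space.span_scale fun_space.span_base) auto

lemma matches_diff: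
  fixes z z' :: "'e \<Rightarrow> 'a::group_add"
  shows "matches z \<xi> \<Longrightarrow> matches z' \<xi>' \<Longrightarrow> matches (z - z') (\<xi> \<union> \<xi>')"
  by (simp add: matches_def)

lemma err_word_in_err_space_cut:
  assumes net: "network V E tail head s T" and ek: "ext_kernels \<omega> E tail head s k f"
    and cut: "is_cut E tail head \<xi> t A" and z: "matches z \<xi>"
  shows "err_word E head f t z \<in> err_space E head f t A"
  unfolding err_word_def err_space_def
proof (intro fun_space.span_sum)
  fix e assume "e \<in> E"
  show "fscale (z e) (row E head f t (Err e)) \<in> fun_space.span ((\<lambda>a. row E head f t (Err a)) ` A)"
  proof (cases "e \<in> \<xi>")
    case True
    then have "is_cut E tail head {e} t A" using is_cut_antimono[OF cut, of "{e}"] by simp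
    with \<open>e \<in> E\<close> show ?thesis by (intro fun_space.span_scale row_Err_in_span_cut[OF net ek])
  next
    case False
    then show ?thesis using z by (simp add: matches_def fun_space.span_zero)
  qed
qed

lemma (in vector_space) independent_if_card_le_dim_span:
  assumes "finite B" "card B \<le> dim (span B)"
  shows "independent B"
proof -
  obtain B' where B': "B' \<subseteq> B" "independent B'" "B \<subseteq> span B'"
    using maximal_independent_subset[of B] by blast
  then have "span B' = span B" using span_superset by (auto simp: span_eq)
  then have "dim (span B) = card B'" using dim_eq_card[OF _ B'(2)] by simp
  then have "B' = B" using assms B'(1) by (intro card_seteq) auto
  with B'(2) show ?thesis by simp
qed

lemma (in vector_space) coeffs_zero_if_dim_span_eq:
  assumes dim: "dim (span (g ` {..<n})) = n" and comb: "(\<Sum>i<n. c i *s g i) = 0" and i: "i < n"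
  shows "c i = 0"
proof -
  let ?B = "g ` {..<n}"
  have card: "card ?B = n"
    using dim_le_card[of "span ?B" ?B] card_image_le[of "{..<n}" g] dim by simp
  then have inj: "inj_on g {..<n}" by (intro eq_card_imp_inj_on) auto
  have "independent ?B" using dim card by (intro independent_if_card_le_dim_span) auto
  moreover have "(\<Sum>v\<in>?B. c (the_inv_into {..<n} g v) *s v) = 0"
    using comb by (simp add: sum.reindex[OF inj] the_inv_into_f_f[OF inj])
  ultimately have "c (the_inv_into {..<n} g (g i)) = 0"
    using i by (intro independentD[of ?B ?B]) auto
  then show ?thesis using the_inv_into_f_f[OF inj] i by simp
qed

lemma msg_word_eq_zero_imp_zero:
  assumes dim: "vector_space.dim fscale (msg_space \<omega> E head f t) = \<omega>"
    and x: "x \<in> messages \<omega>" and w: "msg_word \<omega> E head f t x = 0"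
  shows "x = 0"
proof (rule ext)
  fix i show "x i = 0 i"
  proof (cases "i < \<omega>")
    case True
    then show ?thesis
      using fun_space.coeffs_zero_if_dim_span_eq[of "\<lambda>i. row E head f t (D i)" \<omega> x i] dim w
      by (simp add: msg_space_def msg_word_def)
  next
    case False
    then show ?thesis using x by (simp add: messages_def)
  qed
qed

lemma msg_space_Int_err_space_zero:
  assumes "finite E" "\<xi> \<subseteq> E" "card \<xi> \<le> 2 * ((dmin \<omega> E head f t - 1) div 2)"
    and "v \<in> msg_space \<omega> E head f t" "v \<in> err_space E head f t \<xi>"
  shows "v = 0"
proof (cases "\<xi> = {}")
  \<comment> \<open>dmin may be 0 (as LEAST of an unsatisfiable predicate), so the bound says nothing here\<close>
  case True
  then show ?thesis using assms(5) by (simp add: err_space_def)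
next
  case False
  then have "card \<xi> > 0" using assms(1,2) by (meson card_gt_0_iff finite_subset)
  then have "card \<xi> < dmin \<omega> E head f t" using assms(3) by linarith
  then have "msg_space \<omega> E head f t \<inter> err_space E head f t \<xi> = {0}"
    unfolding dmin_def using assms(2) by (blast dest: not_less_Least)
  then show ?thesis using assms(4,5) by blast
qed

lemma cal_Z_cal_E_obtain_cut:
  assumes "z \<in> cal_Z E (cal_E E tail head t r)"
  obtains \<xi> A where "matches z \<xi>" "is_cut E tail head \<xi> t A" "card A \<le> r"
proof -
  obtain \<xi> where "matches z \<xi>" "mincut E tail head \<xi> t \<le> r"
    using assms by (auto simp: cal_Z_def cal_E_def)
  with mincut_attained[of E tail head \<xi> t] that show ?thesis by fastforce
qed

theorem corollary12:
  fixes V :: "'v set" and E :: "'e set" and tail head :: "'e \<Rightarrow> 'v" and s :: 'v and T :: "'v set"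
    and \<omega> :: nat and k :: "'e inp \<Rightarrow> 'e \<Rightarrow> 'a::{field,finite}"
    and f :: "'e \<Rightarrow> 'e coord \<Rightarrow> 'a" and t :: 'v
  assumes "network V E tail head s T"
    and "\<omega> \<ge> 1"
    and "ext_kernels \<omega> E tail head s k f"
    and "t \<in> T"
    and "vector_space.dim fscale (msg_space \<omega> E head f t) = \<omega>"
  shows "corrects \<omega> E head f t
           (cal_Z E (cal_E E tail head t ((dmin \<omega> E head f t - 1) div 2)))"
  unfolding corrects_def
proof (intro ballI impI)
  let ?r = "(dmin \<omega> E head f t - 1) div 2"
  fix x x' z z'
  assume x: "x \<in> messages \<omega>" "x' \<in> messages \<omega>"
    and z: "z \<in> cal_Z E (cal_E E tail head t ?r)" "z' \<in> cal_Z E (cal_E E tail head t ?r)"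
    and recv: "received \<omega> E head f t x z = received \<omega> E head f t x' z'"
  obtain \<xi> A where A: "matches z \<xi>" "is_cut E tail head \<xi> t A" "card A \<le> ?r"
    using z(1) by (rule cal_Z_cal_E_obtain_cut)
  obtain \<xi>' A' where A': "matches z' \<xi>'" "is_cut E tail head \<xi>' t A'" "card A' \<le> ?r"
    using z(2) by (rule cal_Z_cal_E_obtain_cut)
  have cut: "is_cut E tail head (\<xi>' \<union> \<xi>) t (A' \<union> A)" using is_cut_Un[OF A'(2) A(2)] .
  have "msg_word \<omega> E head f t (x - x') = err_word E head f t (z' - z)"
    using recv by (simp add: received_eq_msg_word_plus_err_word msg_word_diff err_word_diff algebra_simps)
  also have "\<dots> \<in> err_space E head f t (A' \<union> A)"
    by (rule err_word_in_err_space_cut[OF assms(1,3) cut matches_diff[OF A'(1) A(1)]])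
  finally have err: "msg_word \<omega> E head f t (x - x') \<in> err_space E head f t (A' \<union> A)" .
  have "finite E" "A' \<union> A \<subseteq> E" using assms(1) cut by (auto simp: network_def is_cut_def)
  moreover have "card (A' \<union> A) \<le> 2 * ?r" using card_Un_le[of A' A] A(3) A'(3) by linarith
  ultimately have zero: "msg_word \<omega> E head f t (x - x') = 0"
    using msg_word_in_msg_space err by (rule msg_space_Int_err_space_zero)
  have "x - x' \<in> messages \<omega>" using x by (simp add: messages_def)
  then have "x - x' = 0" using zero by (rule msg_word_eq_zero_imp_zero[OF assms(5)])
  then show "x = x'" by simp
qed

end
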